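(* Let $D_K$ be a relative $K$-entropy satisfying Properties (a), (b) and (c) below, and let $H_K$ be the associated conditional entropy, defined by one of the two forms below. Let $X=\{X_j\}$ be an arbitrary POVM on $\mathcal{H}_A$. Then for every density operator $\rho_{AB}$, $$H_K(X|B)\ge\log\frac{1}{c'(X)}+H_K(A|B),\qquad c'(X):=\max_j\mathrm{Tr}(X_j).$$
   Context: All Hilbert spaces are finite-dimensional; $\log$ has an arbitrary but fixed base. A relative $K$-entropy $D_K$ assigns to every pair $(S,T)$ of positive semidefinite operators on a common Hilbert space an extended real number $D_K(S\|T)$. Properties: (a) for every trace-preserving completely positive map (TPCPM) $\mathcal{E}$ (possibly between different spaces), $D_K(\mathcal{E}(S)\|\mathcal{E}(T))\le D_K(S\|T)$; (b) for positive semidefinite $S,T$ on $\mathcal{H}$ and $T'$ on $\mathcal{H}'$, $D_K(S\oplus 0\,\|\,T\oplus T')=D_K(S\|T)$; (c) for every constant $c>0$, $D_K(S\|cT)=D_K(S\|T)+\log\frac1c$. The conditional $K$-entropy of a density operator $\rho_{AB}$ is either $H_K(A|B)=-D_K(\rho_{AB}\|\mathbb{1}_A\otimes\rho_B)$ for all $\rho_{AB}$, or $H_K(A|B)=\max_{\sigma_B}[-D_K(\rho_{AB}\|\mathbb{1}_A\otimes\sigma_B)]$ for all $\rho_{AB}$, maximum over density operators $\sigma_B$. For a POVM $X=\{X_j\}$ on $\mathcal{H}_A$, let $\mathcal{X}:\rho_A\mapsto\sum_j|j\rangle\langle j|_X\,\mathrm{Tr}(X_j\rho_A)$ with $\{|j\rangle\}$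 orthonormal in a register $\mathcal{H}_X$; $H_K(X|B)$ denotes $H_K$ of the state $(\mathcal{X}\otimes\mathcal{I})(\rho_{AB})$ (register $X$ given $B$). *)

theory Defs
  imports "Jordan_Normal_Form.Matrix" "HOL-Library.Extended_Real"
begin

text \<open>Operators on an n-dimensional Hilbert space are n x n complex matrices.
  Composite systems A B are indexed by (i,k) <-> i * dB + k.\<close>

definition mtrace :: "complex mat \<Rightarrow> complex" where
  "mtrace M = (\<Sum>i<dim_row M. M $$ (i, i))"

definition qform :: "nat \<Rightarrow> complex mat \<Rightarrow> (nat \<Rightarrow> complex) \<Rightarrow> complex" where
  "qform n M v = (\<Sum>i<n. \<Sum>j<n. cnj (v i) * M $$ (i, j) * v j)"

definition psd :: "nat \<Rightarrow> complex mat \<Rightarrow> bool" where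
  "psd n M \<longleftrightarrow> M \<in> carrier_mat n n \<and>
     (\<forall>v. Im (qform n M v) = 0 \<and> Re (qform n M v) \<ge> 0)"

definition density :: "nat \<Rightarrow> complex mat \<Rightarrow> bool" where
  "density n M \<longleftrightarrow> psd n M \<and> mtrace M = 1"

definition kron :: "complex mat \<Rightarrow> complex mat \<Rightarrow> complex mat" where
  "kron P Q = mat (dim_row P * dim_row Q) (dim_col P * dim_col Q)
     (\<lambda>(i, j). P $$ (i div dim_row Q, j div dim_col Q) * Q $$ (i mod dim_row Q, j mod dim_col Q))"

definition dsum :: "complex mat \<Rightarrow> complex mat \<Rightarrow> complex mat" where
  "dsum S T = four_block_mat S (0\<^sub>m (dim_row S) (dim_col T)) (0\<^sub>m (dim_row T) (dim_col S)) T"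

definition ptrace_A :: "nat \<Rightarrow> nat \<Rightarrow> complex mat \<Rightarrow> complex mat" where
  "ptrace_A dA dB R = mat dB dB (\<lambda>(k, l). \<Sum>i<dA. R $$ (i * dB + k, i * dB + l))"

text \<open>Trace-preserving completely positive maps from n x n to m x m operators.
  (id_k tensor E) acts blockwise on a (k*n) x (k*n) matrix (ancilla first).\<close>
definition id_tensor :: "nat \<Rightarrow> nat \<Rightarrow> nat \<Rightarrow> (complex mat \<Rightarrow> complex mat) \<Rightarrow> complex mat \<Rightarrow> complex mat" where
  "id_tensor k n m E M = mat (k * m) (k * m)
     (\<lambda>(i, j). E (mat n n (\<lambda>(s, t). M $$ ((i div m) * n + s, (j div m) * n + t))) $$ (i mod m, j mod m))"

definition tpcpm :: "nat \<Rightarrow> nat \<Rightarrow> (complex mat \<Rightarrow> complex mat) \<Rightarrow> bool" where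
  "tpcpm n m E \<longleftrightarrow>
     (\<forall>P \<in> carrier_mat n n. E P \<in> carrier_mat m m) \<and>
     (\<forall>P \<in> carrier_mat n n. \<forall>Q \<in> carrier_mat n n. E (P + Q) = E P + E Q) \<and>
     (\<forall>P \<in> carrier_mat n n. \<forall>c. E (c \<cdot>\<^sub>m P) = c \<cdot>\<^sub>m E P) \<and>
     (\<forall>P \<in> carrier_mat n n. mtrace (E P) = mtrace P) \<and>
     (\<forall>k M. psd (k * n) M \<longrightarrow> psd (k * m) (id_tensor k n m E M))"

text \<open>Properties (a), (b), (c) of a relative K-entropy with logarithm base b.\<close>
definition rel_K_entropy :: "real \<Rightarrow> (complex mat \<Rightarrow> complex mat \<Rightarrow> ereal) \<Rightarrow> bool" where
  "rel_K_entropy b D \<longleftrightarrow>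
     (\<forall>n m E S T. tpcpm n m E \<longrightarrow> psd n S \<longrightarrow> psd n T \<longrightarrow> D (E S) (E T) \<le> D S T) \<and>
     (\<forall>n n' S T T'. psd n S \<longrightarrow> psd n T \<longrightarrow> psd n' T' \<longrightarrow>
        D (dsum S (0\<^sub>m n' n')) (dsum T T') = D S T) \<and>
     (\<forall>n S T c. psd n S \<longrightarrow> psd n T \<longrightarrow> c > 0 \<longrightarrow>
        D S (complex_of_real c \<cdot>\<^sub>m T) = D S T + ereal (log b (1 / c)))"

text \<open>If first_form, H = -D(rho || 1_A tensor rho_B); otherwise the optimised form
  (supremum over density operators sigma_B; equals the maximum when attained).\<close>
definition cond_K_entropy :: "(complex mat \<Rightarrow> complex mat \<Rightarrow> ereal) \<Rightarrow> bool \<Rightarrow> nat \<Rightarrow> nat \<Rightarrow> complex mat \<Rightarrow> ereal" where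
  "cond_K_entropy D first_form dA dB R =
     (if first_form then - D R (kron (1\<^sub>m dA) (ptrace_A dA dB R))
      else (SUP \<sigma>\<in>{\<sigma>. density dB \<sigma>}. - D R (kron (1\<^sub>m dA) \<sigma>)))"

definition povm :: "nat \<Rightarrow> nat \<Rightarrow> (nat \<Rightarrow> complex mat) \<Rightarrow> bool" where
  "povm dA m X \<longleftrightarrow> (\<forall>j<m. psd dA (X j)) \<and> 
     (\<forall>i<dA. \<forall>i'<dA. (\<Sum>j<m. X j $$ (i, i')) = (if i = i' then 1 else 0))"

text \<open>(calX tensor id)(rho_AB): the post-measurement state on register X (dim m) tensor B,
  sum_j |j><j| tensor Tr_A((X_j tensor 1) rho_AB).\<close>
definition meas_XB :: "nat \<Rightarrow> nat \<Rightarrow> nat \<Rightarrow> (nat \<Rightarrow> complex mat) \<Rightarrow> complex mat \<Rightarrow> complex mat" where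
  "meas_XB dA dB m X R = mat (m * dB) (m * dB)
     (\<lambda>(p, q). if p div dB = q div dB then
        (\<Sum>i<dA. \<Sum>i'<dA. X (p div dB) $$ (i, i') * R $$ (i' * dB + p mod dB, i * dB + q mod dB))
      else 0)"

definition c_prime :: "nat \<Rightarrow> (nat \<Rightarrow> complex mat) \<Rightarrow> real" where
  "c_prime m X = Max ((\<lambda>j. Re (mtrace (X j))) ` {..<m})"

end

theory Submission
  imports Defs
begin

(* The measurement map E(rho_AB) = sum_j |j><j| (x) Tr_A((X_j (x) 1) rho_AB) is trace preserving
   and completely positive (its Kraus operators come from Gram decompositions of the X_j), it
   does not change the B-marginal, and it sends 1_A (x) sigma to sum_j Tr(X_j) |j><j| (x) sigma,
   which is dominated by c (1_X (x) sigma) for c = c'(X). Writing c (1_X (x) sigma) as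
   E(1_A (x) sigma) + T' with T' positive, Properties (a), (b) and (c) give
     D(rho || 1_A (x) sigma) >= D(E rho || E(1_A (x) sigma)) >= D(E rho || 1_X (x) sigma) + log(1/c)
   for every sigma, which yields both forms of the conditional entropy. *)

lemma mult_add_less_mult:
  fixes x y a b :: nat
  assumes "x < a" and "y < b"
  shows "x * b + y < a * b"
proof -
  have "x * b + y < (x + 1) * b" using assms(2) by simp
  also have "\<dots> \<le> a * b" using assms(1) by (intro mult_right_mono) auto
  finally show ?thesis .
qed

lemma sum_lessThan_mult:
  fixes a b :: nat
  shows "(\<Sum>p<a * b. f p) = (\<Sum>x<a. \<Sum>y<b. f (x * b + y))"
proof -
  have "(\<Sum>y<b. f (x * b + y)) = sum f {x * b..<x * b + b}" for x
    using sum.shift_bounds_nat_ivl[of f 0 "x * b" b] by (simp add: atLeast0LessThan add.commute)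
  then show ?thesis using sum.nat_group[of f b a] by simp
qed

lemma sum_lessThan_mult_div_eq:
  fixes a b :: nat
  assumes "x0 < a"
  shows "(\<Sum>p<a * b. if p div b = x0 then g p else 0) = (\<Sum>y<b. g (x0 * b + y))"
proof -
  have "(\<Sum>y<b. if (x * b + y) div b = x0 then g (x * b + y) else 0)
      = (if x = x0 then (\<Sum>y<b. g (x0 * b + y)) else 0)" for x
    by (cases "x = x0") (auto intro!: sum.neutral)
  then show ?thesis unfolding sum_lessThan_mult using assms by simp
qed

lemma sum_lessThan_mult_mod_eq:
  fixes a b :: nat
  assumes "l < b"
  shows "(\<Sum>p<a * b. if p mod b = l then g p else 0) = (\<Sum>x<a. g (x * b + l))"
proof -
  have "(\<Sum>y<b. if (x * b + y) mod b = l then g (x * b + y) else 0) = g (x * b + l)" for x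
  proof -
    have "(\<Sum>y<b. if (x * b + y) mod b = l then g (x * b + y) else 0)
        = (\<Sum>y<b. if y = l then g (x * b + y) else 0)"
      by (intro sum.cong refl) simp
    also have "\<dots> = g (x * b + l)" using assms by simp
    finally show ?thesis .
  qed
  then show ?thesis unfolding sum_lessThan_mult by simp
qed

lemma sum_sum_mod_eq:
  fixes a b :: nat
  assumes "l < b" and "l' < b"
  shows "(\<Sum>s<a * b. \<Sum>t<a * b. (if s mod b = l then f (s div b) else 0) * P s t
            * cnj (if t mod b = l' then g (t div b) else 0))
       = (\<Sum>x<a. \<Sum>y<a. f x * P (x * b + l) (y * b + l') * cnj (g y))"
proof -
  have "(\<Sum>s<a * b. \<Sum>t<a * b. (if s mod b = l then f (s div b) else 0) * P s t
            * cnj (if t mod b = l' then g (t div b) else 0))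
      = (\<Sum>s<a * b. if s mod b = l then (\<Sum>t<a * b. if t mod b = l' then
            f (s div b) * P s t * cnj (g (t div b)) else 0) else (0::complex))"
    by (auto intro!: sum.cong)
  also have "\<dots> = (\<Sum>x<a. \<Sum>y<a. f x * P (x * b + l) (y * b + l') * cnj (g y))"
    unfolding sum_lessThan_mult_mod_eq[OF assms(1)] sum_lessThan_mult_mod_eq[OF assms(2)]
    using assms by simp
  finally show ?thesis .
qed

lemma sum_sum_delta:
  assumes "finite A" and "finite B"
  shows "(\<Sum>s\<in>A. \<Sum>t\<in>B. (if s = a then c else 0) * f s t * cnj (if t = a' then d else 0))
       = (if a \<in> A \<and> a' \<in> B then c * f a a' * cnj d else (0::complex))"
proof -
  have "(\<Sum>s\<in>A. \<Sum>t\<in>B. (if s = a then c else 0) * f s t * cnj (if t = a' then d else 0))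
      = (\<Sum>s\<in>A. if s = a then (\<Sum>t\<in>B. if t = a' then c * f a t * cnj d else 0) else 0)"
    by (auto intro!: sum.cong)
  also have "\<dots> = (if a \<in> A \<and> a' \<in> B then c * f a a' * cnj d else 0)"
    using assms by simp
  finally show ?thesis .
qed

lemma sum_rotate3:
  "(\<Sum>p\<in>A. \<Sum>q\<in>B. \<Sum>r\<in>C. g p q r) = (\<Sum>r\<in>C. \<Sum>p\<in>A. \<Sum>q\<in>B. g p q r)"
proof -
  have "(\<Sum>p\<in>A. \<Sum>q\<in>B. \<Sum>r\<in>C. g p q r) = (\<Sum>p\<in>A. \<Sum>r\<in>C. \<Sum>q\<in>B. g p q r)"
    by (intro sum.cong refl sum.swap)
  also have "\<dots> = (\<Sum>r\<in>C. \<Sum>p\<in>A. \<Sum>q\<in>B. g p q r)" by (rule sum.swap)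
  finally show ?thesis .
qed

lemma sum_swap_pairs:
  "(\<Sum>p\<in>A. \<Sum>q\<in>B. \<Sum>s\<in>C. \<Sum>t\<in>D. g p q s t) = (\<Sum>s\<in>C. \<Sum>t\<in>D. \<Sum>p\<in>A. \<Sum>q\<in>B. g p q s t)"
proof -
  have "(\<Sum>p\<in>A. \<Sum>q\<in>B. \<Sum>s\<in>C. \<Sum>t\<in>D. g p q s t)
      = (\<Sum>s\<in>C. \<Sum>p\<in>A. \<Sum>q\<in>B. \<Sum>t\<in>D. g p q s t)"
    by (rule sum_rotate3)
  also have "\<dots> = (\<Sum>s\<in>C. \<Sum>t\<in>D. \<Sum>p\<in>A. \<Sum>q\<in>B. g p q s t)"
    by (intro sum.cong refl sum_rotate3)
  finally show ?thesis .
qed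

lemma qform_add_basis:
  assumes "k < n"
  shows "qform n M (\<lambda>i. v i + (if i = k then t else 0)) = qform n M v
     + cnj t * (\<Sum>j<n. M $$ (k, j) * v j) + t * (\<Sum>i<n. cnj (v i) * M $$ (i, k))
     + cnj t * t * M $$ (k, k)"
proof -
  let ?d = "\<lambda>i. if i = k then t else (0::complex)"
  have expand: "cnj (v i + ?d i) * M $$ (i, j) * (v j + ?d j) =
     cnj (v i) * M $$ (i, j) * v j + cnj (v i) * M $$ (i, j) * ?d j + cnj (?d i) * M $$ (i, j) * v j
     + cnj (?d i) * M $$ (i, j) * ?d j" for i j
    by (simp add: algebra_simps)
  have right: "(\<Sum>i<n. \<Sum>j<n. cnj (v i) * M $$ (i, j) * ?d j) = t * (\<Sum>i<n. cnj (v i) * M $$ (i, k))"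
    using assms by (simp add: sum_distrib_left algebra_simps if_distrib cong: if_cong)
  have "(\<Sum>j<n. cnj (?d i) * M $$ (i, j) * v j) = (if i = k then cnj t * (\<Sum>j<n. M $$ (k, j) * v j) else 0)"
    for i by (simp add: sum_distrib_left algebra_simps)
  then have left: "(\<Sum>i<n. \<Sum>j<n. cnj (?d i) * M $$ (i, j) * v j) = cnj t * (\<Sum>j<n. M $$ (k, j) * v j)"
    using assms by simp
  have "(\<Sum>j<n. cnj (?d i) * M $$ (i, j) * ?d j) = (if i = k then cnj t * t * M $$ (k, k) else 0)" for i
    using assms by (simp add: algebra_simps if_distrib cong: if_cong)
  then have both: "(\<Sum>i<n. \<Sum>j<n. cnj (?d i) * M $$ (i, j) * ?d j) = cnj t * t * M $$ (k, k)"
    using assms by simp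
  show ?thesis unfolding qform_def expand sum.distrib right left both by (simp add: algebra_simps)
qed

lemma qform_basis:
  assumes "k < n"
  shows "qform n M (\<lambda>i. if i = k then t else 0) = cnj t * t * M $$ (k, k)"
  using qform_add_basis[OF assms, of M "\<lambda>_. 0" t] by (simp add: qform_def)

lemma qform_two_basis:
  assumes "i < n" and "j < n"
  shows "qform n M (\<lambda>x. (if x = i then 1 else 0) + (if x = j then t else 0))
     = M $$ (i, i) + cnj t * M $$ (j, i) + t * M $$ (i, j) + cnj t * t * M $$ (j, j)"
proof -
  have row: "M $$ (j, j') * (if j' = i then 1 else 0) = (if j' = i then M $$ (j, i) else 0)" for j'
    by simp
  have col: "cnj (if i' = i then 1 else 0) * M $$ (i', j) = (if i' = i then M $$ (i, j) else 0)" for i'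
    by simp
  show ?thesis
    unfolding qform_add_basis[OF assms(2)] row col
    using assms qform_basis[OF assms(1), of M 1] by simp
qed

lemma psd_diag:
  assumes "psd n M" and "k < n"
  shows "Im (M $$ (k, k)) = 0" and "Re (M $$ (k, k)) \<ge> 0"
proof -
  have "qform n M (\<lambda>i. if i = k then 1 else 0) = M $$ (k, k)"
    using qform_basis[OF assms(2), of M 1] by simp
  then show "Im (M $$ (k, k)) = 0" "Re (M $$ (k, k)) \<ge> 0"
    using assms(1) unfolding psd_def by metis+
qed

lemma psd_hermitian:
  assumes "psd n M" and "i < n" and "j < n"
  shows "M $$ (i, j) = cnj (M $$ (j, i))"
proof -
  have real: "Im (M $$ (i, i) + cnj t * M $$ (j, i) + t * M $$ (i, j) + cnj t * t * M $$ (j, j)) = 0"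
    for t
  proof -
    have "Im (qform n M (\<lambda>x. (if x = i then 1 else 0) + (if x = j then t else 0))) = 0"
      using assms(1) unfolding psd_def by blast
    then show ?thesis unfolding qform_two_basis[OF assms(2,3)] .
  qed
  have "Im (M $$ (i, i)) = 0" and "Im (M $$ (j, j)) = 0" using psd_diag assms by auto
  then have "Im (M $$ (j, i)) + Im (M $$ (i, j)) = 0" and "Re (M $$ (i, j)) - Re (M $$ (j, i)) = 0"
    using real[of 1] real[of \<i>] by simp_all
  then show ?thesis by (simp add: complex_eq_iff)
qed

lemma psd_zero_diag_row:
  assumes M: "psd n M" and k: "k < n" and zero: "M $$ (k, k) = 0" and j: "j < n"
  shows "M $$ (k, j) = 0"
proof (rule ccontr)
  let ?z = "M $$ (k, j)"
  assume "?z \<noteq> 0"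
  then have P: "cmod ?z ^ 2 > 0" by simp
  \<comment> \<open>The test vector \<open>e\<^sub>j - s z e\<^sub>k\<close> with \<open>s\<close> large makes the form negative.\<close>
  define s where "s = (Re (M $$ (j, j)) + 1) / (2 * cmod ?z ^ 2)"
  define t where "t = - complex_of_real s * ?z"
  have "Re (qform n M (\<lambda>x. (if x = j then 1 else 0) + (if x = k then t else 0))) \<ge> 0"
    using M unfolding psd_def by blast
  moreover have "qform n M (\<lambda>x. (if x = j then 1 else 0) + (if x = k then t else 0))
     = M $$ (j, j) - 2 * complex_of_real s * (?z * cnj ?z)"
    unfolding qform_two_basis[OF j k] psd_hermitian[OF M j k] t_def zero by (simp add: algebra_simps)
  moreover have "?z * cnj ?z = complex_of_real (cmod ?z ^ 2)" by (rule complex_norm_square[symmetric])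
  ultimately have "Re (M $$ (j, j)) - 2 * s * cmod ?z ^ 2 \<ge> 0" by simp
  moreover have "2 * s * cmod ?z ^ 2 = Re (M $$ (j, j)) + 1" unfolding s_def using P by simp
  ultimately show False by simp
qed

lemma psd_schur_complement:
  assumes X: "psd n X" and k: "k < n" and pivot: "X $$ (k, k) \<noteq> 0"
  shows "psd n (mat n n (\<lambda>(i, j). X $$ (i, j) - X $$ (i, k) * X $$ (k, j) / X $$ (k, k)))"
proof -
  let ?d = "X $$ (k, k)"
  let ?X' = "mat n n (\<lambda>(i, j). X $$ (i, j) - X $$ (i, k) * X $$ (k, j) / ?d)"
  have d_real: "cnj ?d = ?d" using psd_diag(1)[OF X k] by (simp add: complex_eq_iff)
  have "qform n ?X' v = qform n X (\<lambda>i. v i + (if i = k then - (\<Sum>j<n. X $$ (k, j) * v j) / ?d else 0))"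
    for v
  proof -
    define \<alpha> where "\<alpha> = (\<Sum>j<n. X $$ (k, j) * v j)"
    define \<beta> where "\<beta> = (\<Sum>i<n. cnj (v i) * X $$ (i, k))"
    have \<beta>: "\<beta> = cnj \<alpha>" unfolding \<alpha>_def \<beta>_def
      by (auto simp: psd_hermitian[OF X _ k] intro!: sum.cong)
    have "qform n ?X' v = (\<Sum>i<n. \<Sum>j<n. cnj (v i) * X $$ (i, j) * v j
        - (cnj (v i) * X $$ (i, k)) * (X $$ (k, j) * v j) / ?d)"
      unfolding qform_def by (intro sum.cong refl) (simp add: algebra_simps)
    also have "\<dots> = qform n X v - \<beta> * \<alpha> / ?d"
      unfolding qform_def \<alpha>_def \<beta>_def sum_subtractf sum_divide_distrib sum_distrib_left sum_distrib_right
      by (simp add: sum_distrib_left, rule sum.swap)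
    also have "\<dots> = qform n X v + cnj (- \<alpha> / ?d) * \<alpha> + (- \<alpha> / ?d) * \<beta> + cnj (- \<alpha> / ?d) * (- \<alpha> / ?d) * ?d"
      using pivot d_real \<beta> by (simp add: field_simps)
    also have "\<dots> = qform n X (\<lambda>i. v i + (if i = k then - \<alpha> / ?d else 0))"
      unfolding qform_add_basis[OF k] \<alpha>_def \<beta>_def ..
    finally show ?thesis unfolding \<alpha>_def .
  qed
  then show ?thesis using X unfolding psd_def by auto
qed

lemma psd_pivot_rank_one:
  assumes X: "psd n X" and k: "k < n" and j: "j < n"
  defines "w \<equiv> \<lambda>i. X $$ (i, k) / complex_of_real (sqrt (Re (X $$ (k, k))))"
  shows "w i * cnj (w j) = X $$ (i, k) * X $$ (k, j) / X $$ (k, k)"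
proof -
  let ?d = "X $$ (k, k)"
  have "?d = complex_of_real (Re ?d)" using psd_diag(1)[OF X k] by (simp add: complex_eq_iff)
  moreover have "sqrt (Re ?d) * sqrt (Re ?d) = Re ?d" using psd_diag(2)[OF X k] by simp
  ultimately have "complex_of_real (sqrt (Re ?d)) * complex_of_real (sqrt (Re ?d)) = ?d"
    by (metis of_real_mult)
  moreover have "cnj (X $$ (j, k)) = X $$ (k, j)" using psd_hermitian[OF X k j] by simp
  ultimately show ?thesis unfolding w_def by (simp add: field_simps)
qed

text \<open>Gaussian elimination of the pivots \<open>k - 1, \<dots>, 0\<close>: a nonzero pivot is split off
  as a rank-one term, leaving the Schur complement; a zero pivot has a zero row and column.\<close>

lemma psd_gram_upto:
  assumes "psd n X" and "\<forall>i<n. \<forall>j<n. (k \<le> i \<or> k \<le> j) \<longrightarrow> X $$ (i, j) = 0" and "k \<le> n"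
  shows "\<exists>W. \<forall>i<n. \<forall>j<n. X $$ (i, j) = (\<Sum>r<k. W r i * cnj (W r j))"
  using assms
proof (induction k arbitrary: X)
  case 0
  then show ?case by auto
next
  case (Suc k)
  note X = Suc.prems(1) and supp = Suc.prems(2)
  have k: "k < n" using Suc.prems(3) by simp
  let ?d = "X $$ (k, k)"
  show ?case
  proof (cases "?d = 0")
    case True
    have row: "X $$ (k, j) = 0" and col: "X $$ (j, k) = 0" if "j < n" for j
      using psd_zero_diag_row[OF X k True that] psd_hermitian[OF X that k] by simp_all
    have "\<forall>i<n. \<forall>j<n. (k \<le> i \<or> k \<le> j) \<longrightarrow> X $$ (i, j) = 0"
    proof (intro allI impI)
      fix i j assume "i < n" "j < n" "k \<le> i \<or> k \<le> j"
      then show "X $$ (i, j) = 0" using supp row col by (cases "i = k"; cases "j = k") auto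
    qed
    from Suc.IH[OF X this less_imp_le[OF k]] obtain W
      where "\<forall>i<n. \<forall>j<n. X $$ (i, j) = (\<Sum>r<k. W r i * cnj (W r j))" by blast
    then show ?thesis by (intro exI[of _ "W(k := (\<lambda>_. 0))"]) simp
  next
    case False
    let ?X' = "mat n n (\<lambda>(i, j). X $$ (i, j) - X $$ (i, k) * X $$ (k, j) / ?d)"
    have "\<forall>i<n. \<forall>j<n. (k \<le> i \<or> k \<le> j) \<longrightarrow> ?X' $$ (i, j) = 0"
    proof (intro allI impI)
      fix i j assume ij: "i < n" "j < n" "k \<le> i \<or> k \<le> j"
      show "?X' $$ (i, j) = 0"
      proof (cases "i = k \<or> j = k")
        case True
        then show ?thesis using ij False by auto
      next
        case off_pivot: False
        then have "X $$ (i, j) = 0" "X $$ (i, k) = 0 \<or> X $$ (k, j) = 0" using supp ij k by auto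
        then show ?thesis using ij by auto
      qed
    qed
    from Suc.IH[OF psd_schur_complement[OF X k False] this less_imp_le[OF k]] obtain W
      where W: "\<forall>i<n. \<forall>j<n. ?X' $$ (i, j) = (\<Sum>r<k. W r i * cnj (W r j))" by blast
    let ?w = "\<lambda>i. X $$ (i, k) / complex_of_real (sqrt (Re ?d))"
    show ?thesis
    proof (intro exI allI impI)
      fix i j assume ij: "i < n" "j < n"
      then have "X $$ (i, j) = ?X' $$ (i, j) + ?w i * cnj (?w j)"
        using psd_pivot_rank_one[OF X k \<open>j < n\<close>, of i] by simp
      moreover have "?X' $$ (i, j) = (\<Sum>r<k. W r i * cnj (W r j))" using W ij by blast
      ultimately show "X $$ (i, j) = (\<Sum>r<Suc k. (W(k := ?w)) r i * cnj ((W(k := ?w)) r j))"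
        by simp
    qed
  qed
qed

lemma psd_gram:
  assumes "psd n X"
  shows "\<exists>W. \<forall>i<n. \<forall>j<n. X $$ (i, j) = (\<Sum>r<n. W r i * cnj (W r j))"
  using psd_gram_upto[of n X n] assms by auto

lemma psd_zero: "psd n (0\<^sub>m n n)"
  unfolding psd_def qform_def by simp

lemma psd_trace:
  assumes "psd n M"
  shows "Im (mtrace M) = 0" and "Re (mtrace M) \<ge> 0"
proof -
  have "dim_row M = n" using assms unfolding psd_def by auto
  then show "Im (mtrace M) = 0" "Re (mtrace M) \<ge> 0"
    unfolding mtrace_def Im_sum Re_sum using psd_diag[OF assms] by (auto intro!: sum_nonneg)
qed

text \<open>Operators in Kraus form \<open>\<Sum>\<^sub>r K\<^sub>r M\<^sub>r K\<^sub>r\<^sup>*\<close> with positive \<open>M\<^sub>r\<close>;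
  the Kraus operator \<open>K\<^sub>r\<close> is given by its entries \<open>K r p s\<close>.\<close>

lemma psd_kraus:
  fixes K :: "nat \<Rightarrow> nat \<Rightarrow> nat \<Rightarrow> complex"
  assumes A: "A \<in> carrier_mat m m" and M: "\<forall>r<R. psd (ns r) (Ms r)"
    and kraus: "\<forall>p<m. \<forall>q<m. A $$ (p, q)
      = (\<Sum>r<R. \<Sum>s<ns r. \<Sum>t<ns r. K r p s * Ms r $$ (s, t) * cnj (K r q t))"
  shows "psd m A"
proof -
  have q: "qform m A v = (\<Sum>r<R. qform (ns r) (Ms r) (\<lambda>t. \<Sum>q<m. cnj (K r q t) * v q))" for v
  proof -
    have "qform m A v = (\<Sum>p<m. \<Sum>q<m. \<Sum>r<R. \<Sum>s<ns r. \<Sum>t<ns r.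
        cnj (v p) * K r p s * Ms r $$ (s, t) * cnj (K r q t) * v q)"
      unfolding qform_def using kraus by (simp add: sum_distrib_left sum_distrib_right mult.assoc)
    also have "\<dots> = (\<Sum>r<R. \<Sum>p<m. \<Sum>q<m. \<Sum>s<ns r. \<Sum>t<ns r.
        cnj (v p) * K r p s * Ms r $$ (s, t) * cnj (K r q t) * v q)"
      by (rule sum_rotate3)
    also have "\<dots> = (\<Sum>r<R. \<Sum>s<ns r. \<Sum>t<ns r. \<Sum>p<m. \<Sum>q<m.
        cnj (v p) * K r p s * Ms r $$ (s, t) * cnj (K r q t) * v q)"
      by (rule sum.cong[OF refl sum_swap_pairs])
    also have "\<dots> = (\<Sum>r<R. qform (ns r) (Ms r) (\<lambda>t. \<Sum>q<m. cnj (K r q t) * v q))"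
      unfolding qform_def
      by (simp add: sum_distrib_left sum_distrib_right mult.assoc mult.commute mult.left_commute)
    finally show ?thesis .
  qed
  have "Im (qform m A v) = 0 \<and> Re (qform m A v) \<ge> 0" for v
    using M unfolding q psd_def by (auto simp: Im_sum Re_sum intro: sum_nonneg)
  then show ?thesis using A unfolding psd_def by blast
qed

definition kraus_form ::
    "nat \<Rightarrow> nat \<Rightarrow> nat \<Rightarrow> (nat \<Rightarrow> nat \<Rightarrow> nat \<Rightarrow> complex) \<Rightarrow> (complex mat \<Rightarrow> complex mat) \<Rightarrow> bool" where
  "kraus_form n m R K E \<longleftrightarrow> (\<forall>P \<in> carrier_mat n n. E P \<in> carrier_mat m m \<and>
     (\<forall>p<m. \<forall>q<m. E P $$ (p, q) = (\<Sum>r<R. \<Sum>s<n. \<Sum>t<n. K r p s * P $$ (s, t) * cnj (K r q t))))"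

lemma kraus_form_carrier:
  assumes "kraus_form n m R K E" and "P \<in> carrier_mat n n"
  shows "E P \<in> carrier_mat m m"
  using assms unfolding kraus_form_def by blast

lemma kraus_form_entry:
  assumes "kraus_form n m R K E" and "P \<in> carrier_mat n n" and "p < m" and "q < m"
  shows "E P $$ (p, q) = (\<Sum>r<R. \<Sum>s<n. \<Sum>t<n. K r p s * P $$ (s, t) * cnj (K r q t))"
  using assms unfolding kraus_form_def by blast

lemma id_tensor_psd_kraus:
  assumes E: "kraus_form n m R K E" and M: "psd (k * n) M"
  shows "psd (k * m) (id_tensor k n m E M)"
proof -
  define K' where "K' r p S = (if S div n = p div m then K r (p mod m) (S mod n) else 0)" for r p S
  have "id_tensor k n m E M $$ (p, q) = (\<Sum>r<R. \<Sum>S<k * n. \<Sum>T<k * n. K' r p S * M $$ (S, T) * cnj (K' r q T))"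
    if p: "p < k * m" and q: "q < k * m" for p q
  proof -
    have "m > 0" using p by (cases m) auto
    then have pq: "p div m < k" "q div m < k" "p mod m < m" "q mod m < m"
      using p q by (auto simp: less_mult_imp_div_less)
    let ?B = "mat n n (\<lambda>(s, t). M $$ (p div m * n + s, q div m * n + t))"
    have "id_tensor k n m E M $$ (p, q) = E ?B $$ (p mod m, q mod m)"
      unfolding id_tensor_def using p q by simp
    also have "\<dots> = (\<Sum>r<R. \<Sum>s<n. \<Sum>t<n.
        K r (p mod m) s * M $$ (p div m * n + s, q div m * n + t) * cnj (K r (q mod m) t))"
      using kraus_form_entry[OF E, of ?B] pq by simp
    also have "\<dots> = (\<Sum>r<R. \<Sum>S<k * n. \<Sum>T<k * n. K' r p S * M $$ (S, T) * cnj (K' r q T))"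
    proof (rule sum.cong[OF refl])
      fix r
      have "(\<Sum>S<k * n. \<Sum>T<k * n. K' r p S * M $$ (S, T) * cnj (K' r q T))
        = (\<Sum>S<k * n. if S div n = p div m then (\<Sum>T<k * n. if T div n = q div m then
            K r (p mod m) (S mod n) * M $$ (S, T) * cnj (K r (q mod m) (T mod n)) else 0) else 0)"
        unfolding K'_def by (auto intro!: sum.cong)
      then show "(\<Sum>s<n. \<Sum>t<n. K r (p mod m) s * M $$ (p div m * n + s, q div m * n + t)
          * cnj (K r (q mod m) t)) = (\<Sum>S<k * n. \<Sum>T<k * n. K' r p S * M $$ (S, T) * cnj (K' r q T))"
        using pq by (simp add: sum_lessThan_mult_div_eq)
    qed
    finally show ?thesis .
  qed
  then show ?thesis
    using M by (intro psd_kraus[where R = R and ns = "\<lambda>_. k * n" and Ms = "\<lambda>_. M" and K = K'])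
      (auto simp: id_tensor_def)
qed

lemma tpcpm_kraus:
  assumes E: "kraus_form n m R K E" and trace: "\<forall>P \<in> carrier_mat n n. mtrace (E P) = mtrace P"
  shows "tpcpm n m E"
  unfolding tpcpm_def
proof (intro conjI ballI allI impI)
  fix P :: "complex mat" assume P: "P \<in> carrier_mat n n"
  show "E P \<in> carrier_mat m m" using kraus_form_carrier[OF E P] .
  show "mtrace (E P) = mtrace P" using trace P by blast
  fix c :: complex
  have cP: "c \<cdot>\<^sub>m P \<in> carrier_mat n n" using P by simp
  show "E (c \<cdot>\<^sub>m P) = c \<cdot>\<^sub>m E P"
  proof (rule eq_matI)
    fix p q assume "p < dim_row (c \<cdot>\<^sub>m E P)" "q < dim_col (c \<cdot>\<^sub>m E P)"
    then have "p < m" "q < m" using kraus_form_carrier[OF E P] by auto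
    then show "E (c \<cdot>\<^sub>m P) $$ (p, q) = (c \<cdot>\<^sub>m E P) $$ (p, q)"
      using P cP kraus_form_carrier[OF E P]
      by (simp add: kraus_form_entry[OF E] sum_distrib_left algebra_simps)
  qed (use kraus_form_carrier[OF E P] kraus_form_carrier[OF E cP] in auto)
next
  fix P Q :: "complex mat" assume P: "P \<in> carrier_mat n n" and Q: "Q \<in> carrier_mat n n"
  then have PQ: "P + Q \<in> carrier_mat n n" by simp
  show "E (P + Q) = E P + E Q"
  proof (rule eq_matI)
    fix p q assume "p < dim_row (E P + E Q)" "q < dim_col (E P + E Q)"
    then have "p < m" "q < m" using kraus_form_carrier[OF E Q] by auto
    then show "E (P + Q) $$ (p, q) = (E P + E Q) $$ (p, q)"
      using P Q PQ kraus_form_carrier[OF E P] kraus_form_carrier[OF E Q]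
      by (simp add: kraus_form_entry[OF E] sum.distrib algebra_simps)
  qed (use kraus_form_carrier[OF E Q] kraus_form_carrier[OF E PQ] in auto)
next
  fix k M assume "psd (k * n) M"
  then show "psd (k * m) (id_tensor k n m E M)" by (rule id_tensor_psd_kraus[OF E])
qed

lemma id_tensor_one:
  assumes "M \<in> carrier_mat n n" and "E M \<in> carrier_mat m m"
  shows "id_tensor 1 n m E M = E M"
proof -
  have "mat n n (\<lambda>(s, t). M $$ (s, t)) = M" using assms(1) by (intro eq_matI) auto
  then show ?thesis using assms(2) unfolding id_tensor_def by (intro eq_matI) auto
qed

lemma tpcpm_psd:
  assumes E: "tpcpm n m E" and S: "psd n S"
  shows "psd m (E S)"
proof -
  have "S \<in> carrier_mat n n" and "E S \<in> carrier_mat m m" using E S unfolding tpcpm_def psd_def by auto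
  moreover have "\<forall>k M. psd (k * n) M \<longrightarrow> psd (k * m) (id_tensor k n m E M)"
    using E unfolding tpcpm_def by blast
  then have "psd m (id_tensor 1 n m E S)" using S by (metis mult_1)
  ultimately show ?thesis using id_tensor_one[of S n E m] by simp
qed

lemma mtrace_ptrace_A:
  assumes "P \<in> carrier_mat (dA * dB) (dA * dB)"
  shows "mtrace (ptrace_A dA dB P) = mtrace P"
  using assms unfolding mtrace_def ptrace_A_def
  by (simp add: sum_lessThan_mult) (rule sum.swap)

lemma kraus_form_ptrace_A:
  "kraus_form (dA * dB) dB dA (\<lambda>r p s. if s = r * dB + p then 1 else 0) (ptrace_A dA dB)"
  unfolding kraus_form_def
proof (intro ballI conjI allI impI)
  fix P :: "complex mat" and p q assume "p < dB" "q < dB"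
  then show "ptrace_A dA dB P $$ (p, q) = (\<Sum>r<dA. \<Sum>s<dA * dB. \<Sum>t<dA * dB.
      (if s = r * dB + p then 1 else 0) * P $$ (s, t) * cnj (if t = r * dB + q then 1 else 0))"
    unfolding sum_sum_delta[OF finite_lessThan finite_lessThan] ptrace_A_def
    by (auto simp: mult_add_less_mult intro!: sum.cong)
qed (simp add: ptrace_A_def)

lemma tpcpm_ptrace_A: "tpcpm (dA * dB) dB (ptrace_A dA dB)"
  by (rule tpcpm_kraus[OF kraus_form_ptrace_A]) (simp add: mtrace_ptrace_A)

lemma psd_dsum:
  assumes S: "psd n1 S" and T: "psd n2 T"
  shows "psd (n1 + n2) (dsum S T)"
proof -
  define ns where "ns r = (if r = 0 then n1 else n2)" for r :: nat
  define Ms where "Ms r = (if r = 0 then S else T)" for r :: nat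
  define K where "K r p s = (if r = 0 then (if s = p then 1 else 0)
    else (if s = p - n1 then (if n1 \<le> p then 1 else 0) else 0) :: complex)" for r p s :: nat
  have S': "S \<in> carrier_mat n1 n1" and T': "T \<in> carrier_mat n2 n2" using S T unfolding psd_def by auto
  have "dsum S T $$ (p, q) = (\<Sum>r<2. \<Sum>s<ns r. \<Sum>t<ns r. K r p s * Ms r $$ (s, t) * cnj (K r q t))"
    if "p < n1 + n2" "q < n1 + n2" for p q
    using that S' T' unfolding ns_def Ms_def K_def
    by (simp add: numeral_2_eq_2 sum_sum_delta) (auto simp: dsum_def)
  moreover have "dsum S T \<in> carrier_mat (n1 + n2) (n1 + n2)" using S' T' unfolding dsum_def by auto
  moreover have "\<forall>r<2. psd (ns r) (Ms r)" using S T unfolding ns_def Ms_def by auto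
  ultimately show ?thesis by (intro psd_kraus[where K = K]) auto
qed

lemma ptrace_A_two_dsum:
  assumes "A \<in> carrier_mat n n" and "B \<in> carrier_mat n n"
  shows "ptrace_A 2 n (dsum A B) = A + B"
  using assms unfolding ptrace_A_def dsum_def by (intro eq_matI) (auto simp: numeral_2_eq_2)

text \<open>Properties (b), (a) and (c), applied to the partial trace over a qubit
  \<open>S \<oplus> 0 \<mapsto> S\<close>, \<open>T \<oplus> T' \<mapsto> T + T'\<close>.\<close>

lemma rel_K_entropy_dominated:
  assumes D: "rel_K_entropy b D" and S: "psd n S" and T: "psd n T" and T': "psd n T'"
    and K: "psd n K" and c: "c > 0" and dom: "T + T' = complex_of_real c \<cdot>\<^sub>m K"
  shows "D S K + ereal (log b (1 / c)) \<le> D S T"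
proof -
  have carrier: "S \<in> carrier_mat n n" "T \<in> carrier_mat n n" "T' \<in> carrier_mat n n"
    using S T T' unfolding psd_def by auto
  have "D S K + ereal (log b (1 / c)) = D S (complex_of_real c \<cdot>\<^sub>m K)"
    using D S K c unfolding rel_K_entropy_def by simp
  also have "\<dots> = D (ptrace_A 2 n (dsum S (0\<^sub>m n n))) (ptrace_A 2 n (dsum T T'))"
    using carrier by (simp add: ptrace_A_two_dsum dom)
  also have "\<dots> \<le> D (dsum S (0\<^sub>m n n)) (dsum T T')"
    using D tpcpm_ptrace_A[of 2 n] psd_dsum[OF S psd_zero] psd_dsum[OF T T']
    unfolding rel_K_entropy_def by (simp add: mult_2)
  also have "\<dots> = D S T"
    using D S T T' unfolding rel_K_entropy_def by blast
  finally show ?thesis .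
qed

text \<open>The measurement map has Kraus operators \<open>|j\<rangle>\<langle>w\<^sub>j\<^sub>r| \<otimes> 1\<^sub>B\<close>, where
  \<open>X\<^sub>j = \<Sum>\<^sub>r w\<^sub>j\<^sub>r w\<^sub>j\<^sub>r\<^sup>*\<close>; the pair \<open>(j, r)\<close> is encoded as \<open>j * dA + r\<close>.\<close>

definition meas_kraus :: "nat \<Rightarrow> nat \<Rightarrow> (nat \<Rightarrow> nat \<Rightarrow> nat \<Rightarrow> complex) \<Rightarrow> nat \<Rightarrow> nat \<Rightarrow> nat \<Rightarrow> complex" where
  "meas_kraus dA dB W r p s =
     (if r div dA = p div dB \<and> s mod dB = p mod dB then cnj (W (r div dA) (r mod dA) (s div dB)) else 0)"

lemma meas_XB_carrier: "meas_XB dA dB m X P \<in> carrier_mat (m * dB) (m * dB)"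
  unfolding meas_XB_def by simp

lemma meas_kraus_term:
  assumes "r0 < dA" and "0 < dB"
  shows "(\<Sum>s<dA * dB. \<Sum>t<dA * dB. meas_kraus dA dB W (j * dA + r0) p s * P $$ (s, t)
        * cnj (meas_kraus dA dB W (j * dA + r0) q t))
    = (if j = p div dB \<and> j = q div dB then
        (\<Sum>i'<dA. \<Sum>i<dA. cnj (W j r0 i') * P $$ (i' * dB + p mod dB, i * dB + q mod dB) * W j r0 i)
       else 0)"
proof (cases "j = p div dB \<and> j = q div dB")
  case True
  then have "(\<Sum>s<dA * dB. \<Sum>t<dA * dB. meas_kraus dA dB W (j * dA + r0) p s * P $$ (s, t)
        * cnj (meas_kraus dA dB W (j * dA + r0) q t))
    = (\<Sum>s<dA * dB. \<Sum>t<dA * dB. (if s mod dB = p mod dB then cnj (W j r0 (s div dB)) else 0)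
        * P $$ (s, t) * cnj (if t mod dB = q mod dB then cnj (W j r0 (t div dB)) else 0))"
    using assms unfolding meas_kraus_def by (intro sum.cong refl) auto
  also have "\<dots> = (\<Sum>i'<dA. \<Sum>i<dA. cnj (W j r0 i') * P $$ (i' * dB + p mod dB, i * dB + q mod dB)
      * W j r0 i)"
    using sum_sum_mod_eq[where a = dA and b = dB and l = "p mod dB" and l' = "q mod dB"
        and f = "\<lambda>x. cnj (W j r0 x)" and P = "\<lambda>s t. P $$ (s, t)" and g = "\<lambda>y. cnj (W j r0 y)"]
      assms by simp
  finally show ?thesis using True by simp
next
  case False
  then show ?thesis using assms unfolding meas_kraus_def by (cases "j = p div dB") auto
qed

lemma kraus_form_meas_XB:
  assumes W: "\<forall>j<m. \<forall>i<dA. \<forall>i'<dA. X j $$ (i, i') = (\<Sum>r<dA. W j r i * cnj (W j r i'))"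
  shows "kraus_form (dA * dB) (m * dB) (m * dA) (meas_kraus dA dB W) (meas_XB dA dB m X)"
  unfolding kraus_form_def
proof (intro ballI conjI allI impI)
  fix P :: "complex mat" and p q assume p: "p < m * dB" and q: "q < m * dB"
  define j l l' where "j = p div dB" and "l = p mod dB" and "l' = q mod dB"
  have "0 < dB" using p by (cases dB) auto
  have j: "j < m" using p unfolding j_def by (simp add: less_mult_imp_div_less)
  let ?G = "\<lambda>r0. \<Sum>i'<dA. \<Sum>i<dA. cnj (W j r0 i') * P $$ (i' * dB + l, i * dB + l') * W j r0 i"
  have "(\<Sum>r<m * dA. \<Sum>s<dA * dB. \<Sum>t<dA * dB.
        meas_kraus dA dB W r p s * P $$ (s, t) * cnj (meas_kraus dA dB W r q t))
      = (\<Sum>j0<m. \<Sum>r0<dA. if j0 = j \<and> j0 = q div dB then ?G r0 else 0)"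
    unfolding sum_lessThan_mult[where a = m and b = dA] j_def l_def l'_def
    using \<open>0 < dB\<close> by (intro sum.cong refl) (simp add: meas_kraus_term)
  also have "\<dots> = (\<Sum>j0<m. if j0 = j then (if j = q div dB then sum ?G {..<dA} else 0) else 0)"
    by (intro sum.cong refl) auto
  also have "\<dots> = (if j = q div dB then sum ?G {..<dA} else 0)" using j by simp
  also have "sum ?G {..<dA} = (\<Sum>i<dA. \<Sum>i'<dA. X j $$ (i, i') * P $$ (i' * dB + l, i * dB + l'))"
  proof -
    have "(\<Sum>i<dA. \<Sum>i'<dA. X j $$ (i, i') * P $$ (i' * dB + l, i * dB + l'))
        = (\<Sum>i<dA. \<Sum>i'<dA. \<Sum>r0<dA. cnj (W j r0 i') * P $$ (i' * dB + l, i * dB + l') * W j r0 i)"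
      using W j by (intro sum.cong refl) (simp add: sum_distrib_left sum_distrib_right mult_ac)
    also have "\<dots> = (\<Sum>r0<dA. \<Sum>i<dA. \<Sum>i'<dA. cnj (W j r0 i') * P $$ (i' * dB + l, i * dB + l') * W j r0 i)"
      by (rule sum_rotate3)
    also have "\<dots> = sum ?G {..<dA}" by (intro sum.cong refl sum.swap)
    finally show ?thesis by simp
  qed
  also have "(if j = q div dB then \<Sum>i<dA. \<Sum>i'<dA. X j $$ (i, i') * P $$ (i' * dB + l, i * dB + l')
      else 0) = meas_XB dA dB m X P $$ (p, q)"
    unfolding meas_XB_def j_def l_def l'_def using p q by simp
  finally show "meas_XB dA dB m X P $$ (p, q) = (\<Sum>r<m * dA. \<Sum>s<dA * dB. \<Sum>t<dA * dB.
      meas_kraus dA dB W r p s * P $$ (s, t) * cnj (meas_kraus dA dB W r q t))" by simp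
qed (rule meas_XB_carrier)

lemma ptrace_A_meas_XB:
  assumes X: "povm dA m X" and R: "\<rho> \<in> carrier_mat (dA * dB) (dA * dB)"
  shows "ptrace_A m dB (meas_XB dA dB m X \<rho>) = ptrace_A dA dB \<rho>"
proof (rule eq_matI)
  have complete: "\<forall>i<dA. \<forall>i'<dA. (\<Sum>j<m. X j $$ (i, i')) = (if i = i' then 1 else 0)"
    using X unfolding povm_def by blast
  fix k l assume "k < dim_row (ptrace_A dA dB \<rho>)" "l < dim_col (ptrace_A dA dB \<rho>)"
  then have kl: "k < dB" "l < dB" unfolding ptrace_A_def by auto
  have "ptrace_A m dB (meas_XB dA dB m X \<rho>) $$ (k, l)
      = (\<Sum>j<m. \<Sum>i<dA. \<Sum>i'<dA. X j $$ (i, i') * \<rho> $$ (i' * dB + k, i * dB + l))"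
    unfolding ptrace_A_def meas_XB_def using kl mult_add_less_mult by (auto intro!: sum.cong)
  also have "\<dots> = (\<Sum>i<dA. \<Sum>i'<dA. \<Sum>j<m. X j $$ (i, i') * \<rho> $$ (i' * dB + k, i * dB + l))"
    by (rule sum_rotate3[symmetric])
  also have "\<dots> = (\<Sum>i<dA. \<Sum>i'<dA. (\<Sum>j<m. X j $$ (i, i')) * \<rho> $$ (i' * dB + k, i * dB + l))"
    by (simp add: sum_distrib_right)
  also have "\<dots> = (\<Sum>i<dA. \<Sum>i'<dA. if i = i' then \<rho> $$ (i' * dB + k, i * dB + l) else 0)"
    using complete by (intro sum.cong refl) auto
  also have "\<dots> = ptrace_A dA dB \<rho> $$ (k, l)"
    unfolding ptrace_A_def using kl by simp
  finally show "ptrace_A m dB (meas_XB dA dB m X \<rho>) $$ (k, l) = ptrace_A dA dB \<rho> $$ (k, l)" .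
qed (auto simp: ptrace_A_def)

text \<open>Trace preservation is inherited from the partial trace, which the measurement
  does not change.\<close>

lemma tpcpm_meas_XB:
  assumes X: "povm dA m X"
  shows "tpcpm (dA * dB) (m * dB) (meas_XB dA dB m X)"
proof -
  have "\<exists>W. j < m \<longrightarrow> (\<forall>i<dA. \<forall>i'<dA. X j $$ (i, i') = (\<Sum>r<dA. W r i * cnj (W r i')))" for j
  proof (cases "j < m")
    case True
    then have "psd dA (X j)" using X unfolding povm_def by blast
    from psd_gram[OF this] show ?thesis by blast
  qed simp
  then have "\<exists>W. \<forall>j<m. \<forall>i<dA. \<forall>i'<dA. X j $$ (i, i') = (\<Sum>r<dA. W j r i * cnj (W j r i'))"
    by (intro choice allI)
  then obtain W where "\<forall>j<m. \<forall>i<dA. \<forall>i'<dA. X j $$ (i, i') = (\<Sum>r<dA. W j r i * cnj (W j r i'))"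
    by blast
  then show ?thesis
  proof (rule tpcpm_kraus[OF kraus_form_meas_XB], intro ballI)
    fix P :: "complex mat" assume P: "P \<in> carrier_mat (dA * dB) (dA * dB)"
    have "mtrace (meas_XB dA dB m X P) = mtrace (ptrace_A m dB (meas_XB dA dB m X P))"
      by (simp add: mtrace_ptrace_A meas_XB_carrier)
    also have "\<dots> = mtrace P" using ptrace_A_meas_XB[OF X P] mtrace_ptrace_A[OF P] by simp
    finally show "mtrace (meas_XB dA dB m X P) = mtrace P" .
  qed
qed

lemma kron_one_carrier: "\<sigma> \<in> carrier_mat dB dB \<Longrightarrow> kron (1\<^sub>m d) \<sigma> \<in> carrier_mat (d * dB) (d * dB)"
  unfolding kron_def by simp

lemma kron_one_entry:
  assumes "\<sigma> \<in> carrier_mat dB dB" and "p < d * dB" and "q < d * dB"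
  shows "kron (1\<^sub>m d) \<sigma> $$ (p, q) = (if p div dB = q div dB then \<sigma> $$ (p mod dB, q mod dB) else 0)"
  using assms unfolding kron_def by (simp add: less_mult_imp_div_less)

lemma psd_block_diagonal:
  assumes S: "psd dB \<sigma>" and A: "A \<in> carrier_mat (d * dB) (d * dB)"
    and entry: "\<forall>p<d * dB. \<forall>q<d * dB. A $$ (p, q)
      = (if p div dB = q div dB then w (p div dB) * cnj (w (p div dB)) * \<sigma> $$ (p mod dB, q mod dB) else 0)"
  shows "psd (d * dB) A"
proof -
  define K where "K r p s = (if s = p mod dB then (if p div dB = r then w r else 0) else 0)" for r p s
  have "A $$ (p, q) = (\<Sum>r<d. \<Sum>s<dB. \<Sum>t<dB. K r p s * \<sigma> $$ (s, t) * cnj (K r q t))"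
    if p: "p < d * dB" and q: "q < d * dB" for p q
  proof -
    have "0 < dB" using p by (cases dB) auto
    then have "(\<Sum>r<d. \<Sum>s<dB. \<Sum>t<dB. K r p s * \<sigma> $$ (s, t) * cnj (K r q t))
      = (\<Sum>r<d. if r = p div dB then (if p div dB = q div dB
          then w (p div dB) * cnj (w (p div dB)) * \<sigma> $$ (p mod dB, q mod dB) else 0) else 0)"
      unfolding K_def sum_sum_delta[OF finite_lessThan finite_lessThan] by (intro sum.cong refl) auto
    also have "\<dots> = A $$ (p, q)" using entry p q by (simp add: less_mult_imp_div_less)
    finally show ?thesis by simp
  qed
  then show ?thesis using S A by (intro psd_kraus[where K = K]) auto
qed

lemma psd_kron_one:
  assumes "psd dB \<sigma>"
  shows "psd (d * dB) (kron (1\<^sub>m d) \<sigma>)"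
proof -
  have "\<sigma> \<in> carrier_mat dB dB" using assms unfolding psd_def by simp
  then show ?thesis
    by (intro psd_block_diagonal[where w = "\<lambda>_. 1", OF assms kron_one_carrier])
      (simp_all add: kron_one_entry)
qed

lemma meas_XB_kron_one_entry:
  assumes X: "\<forall>j<m. X j \<in> carrier_mat dA dA" and S: "\<sigma> \<in> carrier_mat dB dB"
    and p: "p < m * dB" and q: "q < m * dB"
  shows "meas_XB dA dB m X (kron (1\<^sub>m dA) \<sigma>) $$ (p, q)
    = (if p div dB = q div dB then mtrace (X (p div dB)) * \<sigma> $$ (p mod dB, q mod dB) else 0)"
proof -
  have "0 < dB" using p by (cases dB) auto
  then have "kron (1\<^sub>m dA) \<sigma> $$ (i' * dB + p mod dB, i * dB + q mod dB)
      = (if i' = i then \<sigma> $$ (p mod dB, q mod dB) else 0)" if "i < dA" "i' < dA" for i i'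
    using that by (simp add: kron_one_entry[OF S] mult_add_less_mult)
  then have "(\<Sum>i<dA. \<Sum>i'<dA. X (p div dB) $$ (i, i')
        * kron (1\<^sub>m dA) \<sigma> $$ (i' * dB + p mod dB, i * dB + q mod dB))
      = (\<Sum>i<dA. X (p div dB) $$ (i, i)) * \<sigma> $$ (p mod dB, q mod dB)"
    by (simp add: sum_distrib_right if_distrib[of "\<lambda>x. _ * x"] cong: if_cong)
  moreover have "p div dB < m" using p by (simp add: less_mult_imp_div_less)
  then have "dim_row (X (p div dB)) = dA" using X by auto
  ultimately show ?thesis unfolding meas_XB_def mtrace_def using p q by auto
qed

text \<open>The measurement sends \<open>1\<^sub>A \<otimes> \<sigma>\<close> to \<open>\<Sum>\<^sub>j Tr(X\<^sub>j) |j\<rangle>\<langle>j| \<otimes> \<sigma>\<close>,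
  which \<open>c (1\<^sub>X \<otimes> \<sigma>)\<close> dominates as soon as every \<open>Tr(X\<^sub>j) \<le> c\<close>.\<close>

lemma psd_kron_one_minus_meas_XB:
  assumes X: "povm dA m X" and S: "psd dB \<sigma>" and trace_le: "\<forall>j<m. Re (mtrace (X j)) \<le> c"
  shows "psd (m * dB) (complex_of_real c \<cdot>\<^sub>m kron (1\<^sub>m m) \<sigma> - meas_XB dA dB m X (kron (1\<^sub>m dA) \<sigma>))"
proof (rule psd_block_diagonal[OF S, where w = "\<lambda>j. complex_of_real (sqrt (c - Re (mtrace (X j))))"])
  have S': "\<sigma> \<in> carrier_mat dB dB" using S unfolding psd_def by simp
  have X': "\<forall>j<m. X j \<in> carrier_mat dA dA" using X unfolding povm_def psd_def by blast
  show "complex_of_real c \<cdot>\<^sub>m kron (1\<^sub>m m) \<sigma> - meas_XB dA dB m X (kron (1\<^sub>m dA) \<sigma>)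
      \<in> carrier_mat (m * dB) (m * dB)"
    by (rule minus_carrier_mat[OF meas_XB_carrier])
  show "\<forall>p<m * dB. \<forall>q<m * dB.
    (complex_of_real c \<cdot>\<^sub>m kron (1\<^sub>m m) \<sigma> - meas_XB dA dB m X (kron (1\<^sub>m dA) \<sigma>)) $$ (p, q)
    = (if p div dB = q div dB then complex_of_real (sqrt (c - Re (mtrace (X (p div dB)))))
        * cnj (complex_of_real (sqrt (c - Re (mtrace (X (p div dB)))))) * \<sigma> $$ (p mod dB, q mod dB)
       else 0)"
  proof (intro allI impI)
    fix p q assume p: "p < m * dB" and q: "q < m * dB"
    define j where "j = p div dB"
    have j: "j < m" unfolding j_def using p by (auto simp: less_mult_imp_div_less)
    have "mtrace (X j) = complex_of_real (Re (mtrace (X j)))"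
      using psd_trace(1)[of dA "X j"] X j unfolding povm_def by (simp add: complex_eq_iff)
    moreover have "sqrt (c - Re (mtrace (X j))) * sqrt (c - Re (mtrace (X j))) = c - Re (mtrace (X j))"
      using trace_le j by simp
    ultimately have w: "complex_of_real (sqrt (c - Re (mtrace (X j))))
        * cnj (complex_of_real (sqrt (c - Re (mtrace (X j))))) = complex_of_real c - mtrace (X j)"
      by (metis complex_cnj_complex_of_real of_real_diff of_real_mult)
    have "(complex_of_real c \<cdot>\<^sub>m kron (1\<^sub>m m) \<sigma> - meas_XB dA dB m X (kron (1\<^sub>m dA) \<sigma>)) $$ (p, q)
        = complex_of_real c * kron (1\<^sub>m m) \<sigma> $$ (p, q) - meas_XB dA dB m X (kron (1\<^sub>m dA) \<sigma>) $$ (p, q)"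
      using p q kron_one_carrier[OF S', of m] meas_XB_carrier[of dA dB m X "kron (1\<^sub>m dA) \<sigma>"] by simp
    also have "\<dots> = (if j = q div dB then (complex_of_real c - mtrace (X j)) * \<sigma> $$ (p mod dB, q mod dB)
        else 0)"
      unfolding kron_one_entry[OF S' p q] meas_XB_kron_one_entry[OF X' S' p q] j_def
      by (simp add: algebra_simps)
    finally show "(complex_of_real c \<cdot>\<^sub>m kron (1\<^sub>m m) \<sigma> - meas_XB dA dB m X (kron (1\<^sub>m dA) \<sigma>)) $$ (p, q)
      = (if p div dB = q div dB then complex_of_real (sqrt (c - Re (mtrace (X (p div dB)))))
        * cnj (complex_of_real (sqrt (c - Re (mtrace (X (p div dB)))))) * \<sigma> $$ (p mod dB, q mod dB)
       else 0)"
      unfolding j_def[symmetric] w .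
  qed
qed

lemma rel_K_entropy_meas_XB:
  assumes D: "rel_K_entropy b D" and X: "povm dA m X" and R: "psd (dA * dB) \<rho>" and S: "psd dB \<sigma>"
    and c: "c > 0" and trace_le: "\<forall>j<m. Re (mtrace (X j)) \<le> c"
  shows "D (meas_XB dA dB m X \<rho>) (kron (1\<^sub>m m) \<sigma>) + ereal (log b (1 / c))
    \<le> D \<rho> (kron (1\<^sub>m dA) \<sigma>)"
proof -
  let ?E = "meas_XB dA dB m X"
  let ?I = "kron (1\<^sub>m dA) \<sigma>"
  let ?K = "kron (1\<^sub>m m) \<sigma>"
  have E: "tpcpm (dA * dB) (m * dB) ?E" by (rule tpcpm_meas_XB[OF X])
  have I: "psd (dA * dB) ?I" and K: "psd (m * dB) ?K" using psd_kron_one[OF S] by auto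
  have EI: "psd (m * dB) (?E ?I)" by (rule tpcpm_psd[OF E I])
  have gap: "psd (m * dB) (complex_of_real c \<cdot>\<^sub>m ?K - ?E ?I)"
    by (rule psd_kron_one_minus_meas_XB[OF X S trace_le])
  have "?E ?I + (complex_of_real c \<cdot>\<^sub>m ?K - ?E ?I) = complex_of_real c \<cdot>\<^sub>m ?K"
    using EI K unfolding psd_def by auto
  then have "D (?E \<rho>) ?K + ereal (log b (1 / c)) \<le> D (?E \<rho>) (?E ?I)"
    by (rule rel_K_entropy_dominated[OF D tpcpm_psd[OF E R] EI gap K c])
  also have "\<dots> \<le> D \<rho> ?I" using D E R I unfolding rel_K_entropy_def by blast
  finally show ?thesis .
qed

lemma density_dim_pos:
  assumes "density n \<rho>"
  shows "n > 0"
proof (rule ccontr)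
  assume "\<not> n > 0"
  then have "dim_row \<rho> = 0" using assms unfolding density_def psd_def by auto
  then show False using assms unfolding density_def mtrace_def by simp
qed

lemma trace_le_c_prime:
  assumes "j < m"
  shows "Re (mtrace (X j)) \<le> c_prime m X"
  using assms unfolding c_prime_def by auto

text \<open>The traces of the POVM elements add up to \<open>dA > 0\<close>, so the largest one is positive.\<close>

lemma c_prime_pos:
  assumes X: "povm dA m X" and dA: "dA > 0"
  shows "c_prime m X > 0"
proof -
  have complete: "\<forall>i<dA. \<forall>i'<dA. (\<Sum>j<m. X j $$ (i, i')) = (if i = i' then 1 else 0)"
    and X': "\<forall>j<m. X j \<in> carrier_mat dA dA" using X unfolding povm_def psd_def by blast+
  have "(\<Sum>j<m. mtrace (X j)) = (\<Sum>j<m. \<Sum>i<dA. X j $$ (i, i))"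
    unfolding mtrace_def using X' by (intro sum.cong refl) auto
  also have "\<dots> = of_nat dA" using complete by (subst sum.swap) simp
  finally have "(\<Sum>j<m. Re (mtrace (X j))) = real dA" by (simp flip: Re_sum)
  then have "(\<Sum>j<m. Re (mtrace (X j))) > 0" using dA by simp
  then obtain j where "j < m" "Re (mtrace (X j)) > 0"
    by (metis (no_types, lifting) lessThan_iff not_le sum_nonpos)
  then show ?thesis using trace_le_c_prime[of j m X] by linarith
qed

lemma ereal_add_le_uminus:
  fixes x y :: ereal
  shows "x + ereal r \<le> y \<Longrightarrow> ereal r + - y \<le> - x"
  by (cases x; cases y) auto

lemma ereal_add_SUP_le_SUP:
  fixes f g :: "'a \<Rightarrow> ereal"
  assumes "\<And>x. x \<in> I \<Longrightarrow> ereal a + f x \<le> g x"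
  shows "ereal a + (SUP x\<in>I. f x) \<le> (SUP x\<in>I. g x)"
proof (cases "I = {}")
  case True
  then show ?thesis by (simp add: bot_ereal_def)
next
  case False
  then have "ereal a + (SUP x\<in>I. f x) = (SUP x\<in>I. ereal a + f x)"
    by (intro SUP_ereal_add_right[symmetric]) simp_all
  also have "\<dots> \<le> (SUP x\<in>I. g x)" using assms by (intro SUP_mono) blast
  finally show ?thesis .
qed

theorem lemma3:
  fixes D :: "complex mat \<Rightarrow> complex mat \<Rightarrow> ereal"
    and b :: real and first_form :: bool
    and dA dB m :: nat and X :: "nat \<Rightarrow> complex mat" and \<rho> :: "complex mat"
  assumes "b > 0" and "b \<noteq> 1"
    and "rel_K_entropy b D"
    and "povm dA m X"
    and "density (dA * dB) \<rho>"
  shows "cond_K_entropy D first_form m dB (meas_XB dA dB m X \<rho>)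
           \<ge> ereal (log b (1 / c_prime m X)) + cond_K_entropy D first_form dA dB \<rho>"
proof -
  have R: "psd (dA * dB) \<rho>" using assms(5) unfolding density_def by simp
  have "dA > 0" using density_dim_pos[OF assms(5)] by simp
  then have c: "c_prime m X > 0" by (rule c_prime_pos[OF assms(4)])
  have trace_le: "\<forall>j<m. Re (mtrace (X j)) \<le> c_prime m X" using trace_le_c_prime by blast
  have shifted: "ereal (log b (1 / c_prime m X)) + - D \<rho> (kron (1\<^sub>m dA) \<sigma>)
      \<le> - D (meas_XB dA dB m X \<rho>) (kron (1\<^sub>m m) \<sigma>)" if "psd dB \<sigma>" for \<sigma>
    by (rule ereal_add_le_uminus[OF rel_K_entropy_meas_XB[OF assms(3,4) R that c trace_le]])
  show ?thesis
  proof (cases first_form)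
    case True
    have "ptrace_A m dB (meas_XB dA dB m X \<rho>) = ptrace_A dA dB \<rho>"
      using R ptrace_A_meas_XB[OF assms(4)] unfolding psd_def by blast
    then show ?thesis
      using True shifted[OF tpcpm_psd[OF tpcpm_ptrace_A R]] unfolding cond_K_entropy_def by simp
  next
    case False
    then show ?thesis
      using shifted unfolding cond_K_entropy_def density_def by (auto intro: ereal_add_SUP_le_SUP)
  qed
qed

end
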